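(* Let $g\in\mathbb{I}_{\geq1}$, $c\in\mathbb{I}_{\geq g}$, $b\in\mathbb{I}_{\geq c}$ be integers with $q:=\lceil c/g\rceil\geq 2$. Let $\mathbb{X}_p\subseteq\mathbb{R}^{n_p}$, $\mathbb{U}_p\subseteq\mathbb{R}^{m_p}$ be closed sets containing the origin, $f_p:\mathbb{R}^{n_p}\times\mathbb{R}^{m_p}\to\mathbb{R}^{n_p}$ with $f_p(0,0)=0$, $\mathbb{X}_{f,p}\subseteq\mathbb{X}_p$ closed containing the origin, and $k_p:\mathbb{X}_{f,p}\to\mathbb{U}_p$. Consider the system $x^+=f(x,u)$ with state $x=(x_p,u_s,\beta)$, input $u=(u_c,\gamma,\delta)$ with $\gamma,\delta\in\{0,1\}$, $\gamma+\delta\leq1$, and $$f(x,u)=\big(f_p(x_p,(\gamma+\delta)u_c+(1-\gamma-\delta)u_s),\ (\gamma+\delta)u_c+(1-\gamma-\delta)u_s,\ \min\{\beta+(1-\delta)g-\gamma c,\,b\}\big).$$ Let $\mathbb{X}_f:=\mathbb{X}_{f,p}\times\mathbb{U}_p\times\mathbb{I}_{[0,b]}$, the terminal control sequence $\kappa_0(x):=(k_p(x_p),0,1)$ and $\kappa_j(x):=(0,0,0)$ for $j\in\mathbb{I}_{[1,q-1]}$, $f_0(x):=x$, $f_i(x):=f(f_{i-1}(x),\kappa_{(i-1)\bmod q}(f_{i-1}(x)))$, and let $f_{\beta,i}(x)$ be the last component of $f_i(x)$. For $\sigma>0$ let $V_{f,\beta}(\beta):=\sigma(b^2-\beta^2)$.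 Then there exists $\alpha:\mathbb{I}_{[0,b]}\to\mathbb{R}$ with $\alpha(b)=0$ and $\alpha(\beta)>0$ for all $\beta\in\mathbb{I}_{[0,b-1]}$ such that for all $x\in\mathbb{X}_f$, $$V_{f,\beta}(f_{\beta,q}(x))-V_{f,\beta}(\beta)\leq-\alpha(\beta).$$
   Context: $\mathbb{I}$ denotes the integers, $\mathbb{I}_{[a,b]}:=\mathbb{I}\cap[a,b]$, $\mathbb{I}_{\geq a}:=\mathbb{I}\cap[a,\infty)$. The component $\beta$ is the token level of a token bucket (size $b$, token rate $g$, transmission cost $c$); $\gamma=1$ denotes a transmission subject to the token bucket and $\delta=1$ a transmission over a direct link that consumes no tokens and during which no tokens are added. *)

theory Defs
  imports "HOL-Analysis.Analysis"
begin

definition tb_f :: "('a \<Rightarrow> 'b \<Rightarrow> 'a) \<Rightarrow> int \<Rightarrow> int \<Rightarrow> int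
    \<Rightarrow> ('a \<times> 'b::real_vector \<times> int) \<Rightarrow> ('b \<times> int \<times> int) \<Rightarrow> ('a \<times> 'b \<times> int)" where
  "tb_f fp g c b x u =
     (case x of (xp, us, \<beta>) \<Rightarrow> case u of (uc, \<gamma>, \<delta>) \<Rightarrow>
        let v = of_int (\<gamma> + \<delta>) *\<^sub>R uc + of_int (1 - \<gamma> - \<delta>) *\<^sub>R us
        in (fp xp v, v, min (\<beta> + (1 - \<delta>) * g - \<gamma> * c) b))"

definition tb_kappa :: "('a \<Rightarrow> 'b::real_vector) \<Rightarrow> nat \<Rightarrow> ('a \<times> 'b \<times> int) \<Rightarrow> ('b \<times> int \<times> int)" where
  "tb_kappa kp j x = (if j = 0 then (kp (fst x), 0, 1) else (0, 0, 0))"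

fun tb_fi :: "('a \<Rightarrow> 'b \<Rightarrow> 'a) \<Rightarrow> ('a \<Rightarrow> 'b::real_vector) \<Rightarrow> int \<Rightarrow> int \<Rightarrow> int \<Rightarrow> nat \<Rightarrow> nat
    \<Rightarrow> ('a \<times> 'b \<times> int) \<Rightarrow> ('a \<times> 'b \<times> int)" where
  "tb_fi fp kp g c b q 0 x = x"
| "tb_fi fp kp g c b q (Suc i) x =
     (let y = tb_fi fp kp g c b q i x in tb_f fp g c b y (tb_kappa kp (i mod q) y))"

definition V_f_beta :: "real \<Rightarrow> int \<Rightarrow> int \<Rightarrow> real" where
  "V_f_beta \<sigma> b \<beta> = \<sigma> * (real_of_int b ^ 2 - real_of_int \<beta> ^ 2)"

end

theory Submission
  imports Defs
begin

text \<open>The terminal sequence first transmits over the direct link, which leaves the token level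
  unchanged, and then stays idle for q - 1 \<ge> 1 steps, each adding g tokens up to the bucket size b.
  Hence after q steps the level is min (\<beta> + (q - 1) g) b \<ge> min (\<beta> + g) b, and since V_f_beta is
  decreasing on nonnegative levels, the cost drops at least by
  \<alpha> \<beta> = V_f_beta \<sigma> b \<beta> - V_f_beta \<sigma> b (min (\<beta> + g) b), which is positive below b.
  Only the token level matters.\<close>

lemma tb_f_token_level:
  "snd (snd (tb_f fp g c b x (uc, \<gamma>, \<delta>))) = min (snd (snd x) + (1 - \<delta>) * g - \<gamma> * c) b"
  by (cases x) (simp add: tb_f_def Let_def)

lemma tb_fi_token_level:
  assumes "snd (snd x) \<le> b" and "g \<ge> 0" and "Suc n \<le> q"
  shows "snd (snd (tb_fi fp kp g c b q (Suc n) x)) = min (snd (snd x) + int n * g) b"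
  using assms(3)
proof (induction n)
  case 0
  then show ?case using assms(1) by (simp add: tb_kappa_def tb_f_token_level)
next
  case (Suc n)
  then have "Suc n mod q = Suc n" by simp
  with Suc show ?case using assms(2)
    by (simp add: tb_kappa_def tb_f_token_level Let_def min_def algebra_simps)
qed

lemma V_f_beta_antimono:
  assumes "\<sigma> \<ge> 0" and "0 \<le> \<beta>" and "\<beta> \<le> \<beta>'"
  shows "V_f_beta \<sigma> b \<beta>' \<le> V_f_beta \<sigma> b \<beta>"
proof -
  have "real_of_int \<beta> ^ 2 \<le> real_of_int \<beta>' ^ 2"
    using assms(2,3) by (intro power_mono) auto
  then show ?thesis
    using assms(1) by (simp add: V_f_beta_def mult_left_mono)
qed

lemma V_f_beta_strict_antimono:
  assumes "\<sigma> > 0" and "0 \<le> \<beta>" and "\<beta> < \<beta>'"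
  shows "V_f_beta \<sigma> b \<beta>' < V_f_beta \<sigma> b \<beta>"
proof -
  have "real_of_int \<beta> ^ 2 < real_of_int \<beta>' ^ 2"
    using assms(2,3) by (intro power_strict_mono) auto
  then show ?thesis
    using assms(1) by (simp add: V_f_beta_def)
qed

theorem lemma3:
  fixes g c b :: int and \<sigma> :: real
    and Xp Xfp :: "'a::euclidean_space set" and Up :: "'b::euclidean_space set"
    and fp :: "'a \<Rightarrow> 'b \<Rightarrow> 'a" and kp :: "'a \<Rightarrow> 'b"
  assumes "g \<ge> 1" and "c \<ge> g" and "b \<ge> c"
    and "nat \<lceil>real_of_int c / real_of_int g\<rceil> \<ge> 2"
    and "closed Xp" and "0 \<in> Xp" and "closed Up" and "0 \<in> Up"
    and "fp 0 0 = 0"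
    and "Xfp \<subseteq> Xp" and "closed Xfp" and "0 \<in> Xfp"
    and "\<forall>x\<in>Xfp. kp x \<in> Up"
    and "\<sigma> > 0"
  shows "\<exists>\<alpha> :: int \<Rightarrow> real. \<alpha> b = 0 \<and> (\<forall>\<beta>\<in>{0..b-1}. \<alpha> \<beta> > 0) \<and>
           (\<forall>x \<in> Xfp \<times> Up \<times> {0..b}.
              V_f_beta \<sigma> b (snd (snd (tb_fi fp kp g c b (nat \<lceil>real_of_int c / real_of_int g\<rceil>)
                                  (nat \<lceil>real_of_int c / real_of_int g\<rceil>) x)))
              - V_f_beta \<sigma> b (snd (snd x)) \<le> - \<alpha> (snd (snd x)))"
proof -
  define q where "q = nat \<lceil>real_of_int c / real_of_int g\<rceil>"
  define \<alpha> where "\<alpha> \<beta> = V_f_beta \<sigma> b \<beta> - V_f_beta \<sigma> b (min (\<beta> + g) b)" for \<beta>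
  have "\<alpha> b = 0"
    using assms(1) by (simp add: \<alpha>_def)
  moreover have "\<alpha> \<beta> > 0" if "\<beta> \<in> {0..b-1}" for \<beta>
    using that assms(1,14) V_f_beta_strict_antimono[of \<sigma> \<beta> "min (\<beta> + g) b" b]
    by (simp add: \<alpha>_def)
  moreover have "V_f_beta \<sigma> b (snd (snd (tb_fi fp kp g c b q q x))) - V_f_beta \<sigma> b (snd (snd x))
      \<le> - \<alpha> (snd (snd x))"
    if x: "x \<in> Xfp \<times> Up \<times> {0..b}" for x
  proof -
    define n where "n = q - 1"
    have "Suc n = q" and "n \<ge> 1"
      using assms(4) unfolding n_def q_def by linarith+
    then have "g \<le> int n * g"
      using assms(1) by (simp add: mult_right_mono)
    then have "min (snd (snd x) + g) b \<le> min (snd (snd x) + int n * g) b"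
      by linarith
    moreover have "snd (snd (tb_fi fp kp g c b q q x)) = min (snd (snd x) + int n * g) b"
      using tb_fi_token_level[of x b g n q] x assms(1) unfolding \<open>Suc n = q\<close> by auto
    ultimately have "V_f_beta \<sigma> b (snd (snd (tb_fi fp kp g c b q q x)))
        \<le> V_f_beta \<sigma> b (min (snd (snd x) + g) b)"
      using x assms(1,3,14) V_f_beta_antimono[of \<sigma> "min (snd (snd x) + g) b"] by auto
    then show ?thesis
      by (simp add: \<alpha>_def)
  qed
  ultimately show ?thesis
    unfolding q_def[symmetric] by blast
qed

end
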